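(* Let $R$ be any ring and let $x,y\in R$ satisfy $x^2=0$, $y^2=0$, $x\neq 0$, $y\neq 0$. If $x+y$ is nilpotent, then $xy$ is nilpotent.
   Context: Rings are associative and not necessarily unital. *)

theory Defs
  imports Main
begin

text \<open>Positive powers in a (possibly non-unital) semigroup: ppow x n = x^(n+1).\<close>
fun ppow :: "'a::semigroup_mult \<Rightarrow> nat \<Rightarrow> 'a" where
  "ppow x 0 = x"
| "ppow x (Suc n) = ppow x n * x"

definition nilpotent :: "'a::{semigroup_mult,zero} \<Rightarrow> bool" where
  "nilpotent x \<longleftrightarrow> (\<exists>n. ppow x n = 0)"

end

theory Submission
  imports Defs
begin

text \<open>Since \<open>x\<^sup>2 = y\<^sup>2 = 0\<close>, we get \<open>(x + y)\<^sup>2 = xy + yx\<close>, and the two summands annihilate each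
  other from both sides, so \<open>(x + y)\<^sup>2\<^sup>k = (xy)\<^sup>k + (yx)\<^sup>k\<close>. If this vanishes, multiplying by
  \<open>x\<close> on the left and \<open>y\<close> on the right kills \<open>x(xy)\<^sup>ky\<close> and turns \<open>x(yx)\<^sup>ky\<close> into
  \<open>(xy)\<^sup>k\<^sup>+\<^sup>1\<close>.\<close>

lemma ppow_eq_0_mono:
  assumes "ppow (a::'a::semiring_0) n = 0" and "n \<le> m"
  shows "ppow a m = 0"
  using assms(2) by (induction m rule: dec_induct) (auto simp: assms(1))

lemma ppow_mult_self: "ppow (a::'a::semigroup_mult) (2 * k + 1) = ppow (a * a) k"
  by (induction k) (auto simp: mult.assoc)

lemma nilpotent_mult_self_iff: "nilpotent (a * a) \<longleftrightarrow> nilpotent (a::'a::semiring_0)"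
proof
  assume "nilpotent (a * a)"
  then show "nilpotent a"
    unfolding nilpotent_def by (metis ppow_mult_self)
next
  assume "nilpotent a"
  then obtain n where "ppow a n = 0"
    unfolding nilpotent_def by blast
  then have "ppow a (2 * n + 1) = 0"
    by (rule ppow_eq_0_mono) simp
  then show "nilpotent (a * a)"
    unfolding nilpotent_def ppow_mult_self by blast
qed

lemma ppow_mult_right_eq_0: "a * b = 0 \<Longrightarrow> ppow (a::'a::semiring_0) k * b = 0"
  by (induction k) (auto simp: mult.assoc)

lemma ppow_add_orthogonal:
  assumes "a * b = 0" and "b * a = 0"
  shows "ppow (a + b::'a::semiring_0) k = ppow a k + ppow b k"
proof (induction k)
  case 0
  then show ?case by simp
next
  case (Suc k)
  have "ppow (a + b) (Suc k) = (ppow a k + ppow b k) * (a + b)"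
    using Suc by simp
  also have "\<dots> = ppow a k * a + ppow a k * b + ppow b k * a + ppow b k * b"
    by (simp add: algebra_simps)
  also have "\<dots> = ppow a (Suc k) + ppow b (Suc k)"
    using ppow_mult_right_eq_0[OF assms(1)] ppow_mult_right_eq_0[OF assms(2)] by simp
  finally show ?case .
qed

lemma mult_ppow_swap: "a * ppow (b * a) k = ppow (a * b::'a::semigroup_mult) k * a"
proof (induction k)
  case (Suc k)
  have "a * ppow (b * a) (Suc k) = a * ppow (b * a) k * (b * a)"
    by (simp add: mult.assoc)
  then show ?case
    using Suc by (simp add: mult.assoc)
qed (simp add: mult.assoc)

lemma mult_ppow_eq_0: "a * a = 0 \<Longrightarrow> a * ppow (a * b::'a::semiring_0) k = 0"
  by (induction k) (simp_all add: mult.assoc[symmetric])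

lemma ppow_Suc_eq_0_if_sum_eq_0:
  fixes a b :: "'a::semiring_0"
  assumes "a * a = 0" and "ppow (a * b) k + ppow (b * a) k = 0"
  shows "ppow (a * b) (Suc k) = 0"
proof -
  have "ppow (a * b) (Suc k) = a * ppow (b * a) k * b"
    by (simp add: mult_ppow_swap mult.assoc)
  also have "\<dots> = a * (ppow (a * b) k + ppow (b * a) k) * b"
    using mult_ppow_eq_0[OF assms(1)] by (simp add: distrib_left)
  finally show ?thesis
    using assms(2) by simp
qed

theorem lemma2p1:
  fixes x y :: "'a::ring"
  assumes "x * x = 0" and "y * y = 0" and "x \<noteq> 0" and "y \<noteq> 0"
    and "nilpotent (x + y)"
  shows "nilpotent (x * y)"
proof -
  have square: "(x + y) * (x + y) = x * y + y * x"
    using assms(1,2) by (simp add: algebra_simps)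
  have "x * y * (y * x) = 0"
    using assms(2) by (metis mult.assoc mult_zero_left mult_zero_right)
  moreover have "y * x * (x * y) = 0"
    using assms(1) by (metis mult.assoc mult_zero_left mult_zero_right)
  ultimately have ppow_sum: "ppow (x * y + y * x) k = ppow (x * y) k + ppow (y * x) k" for k
    by (rule ppow_add_orthogonal)
  have "nilpotent ((x + y) * (x + y))"
    using assms(5) by (simp only: nilpotent_mult_self_iff)
  then obtain k where "ppow (x * y + y * x) k = 0"
    unfolding square nilpotent_def by blast
  then have "ppow (x * y) (Suc k) = 0"
    using ppow_Suc_eq_0_if_sum_eq_0[OF assms(1)] by (simp add: ppow_sum)
  then show ?thesis
    unfolding nilpotent_def by blast
qed

end
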